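(* Let $n\in\mathbb{N}$, let $0\le\alpha_1\le\alpha_2\le\dots\le\alpha_n$ and $\beta_1\ge\beta_2\ge\dots\ge\beta_n\ge0$ be real numbers, and set $D_1=\bigoplus_{j=1}^n\mathrm{diag}(\alpha_j,\alpha_j)$ and $D_2=\bigoplus_{j=1}^n\mathrm{diag}(\beta_j,\beta_j)$ (both $2n\times 2n$). Then $$\min_{S\in\mathrm{Sp}(2n)}\operatorname{Tr}[D_1SD_2S^\intercal]=\operatorname{Tr}[D_1D_2],$$ where the minimum is over all real symplectic $2n\times 2n$ matrices.
   Context: $\mathrm{Sp}(2n)$ is the set of real $2n\times 2n$ matrices $S$ with $S\Omega S^\intercal=\Omega$, where $\Omega=\bigoplus_{i=1}^n\begin{pmatrix}0&1\\-1&0\end{pmatrix}$. *)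

theory Defs
  imports "Jordan_Normal_Form.Matrix"
begin

definition mtrace :: "real mat \<Rightarrow> real" where
  "mtrace A = (\<Sum>i<dim_row A. A $$ (i, i))"

(* Omega = direct sum of n copies of [[0,1],[-1,0]] (0-based indices: block j = {2j, 2j+1}). *)
definition Omega :: "nat \<Rightarrow> real mat" where
  "Omega n = mat (2*n) (2*n) (\<lambda>(i, j).
      if i div 2 = j div 2 \<and> even i \<and> odd j then 1
      else if i div 2 = j div 2 \<and> odd i \<and> even j then -1
      else 0)"

definition symplectic :: "nat \<Rightarrow> real mat \<Rightarrow> bool" where
  "symplectic n S \<longleftrightarrow> S \<in> carrier_mat (2*n) (2*n) \<and> S * Omega n * transpose_mat S = Omega n"

(* direct sum over j<n of diag(a j, a j), a 2n x 2n diagonal matrix (0-based j). *)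
definition pair_diag :: "nat \<Rightarrow> (nat \<Rightarrow> real) \<Rightarrow> real mat" where
  "pair_diag n a = mat (2*n) (2*n) (\<lambda>(i, j). if i = j then a (i div 2) else 0)"

end

(*
  Abel summation writes alpha and beta as nonnegative combinations of the step vectors
  [a <= p] and [r <= b] (on the pair indices p, r < n).  Both traces are then the same
  nonnegative combination over pairs (a, b): for Tr[D1 D2] the coefficient of (a, b) is
  the number 2 (b + 1 - a) of diagonal positions in the corner "rows >= 2a, columns < 2(b+1)"
  (zero if a > b), and for Tr[D1 S D2 S^T] it is the squared Frobenius norm of that corner
  of S.  So it suffices that this corner of a symplectic S has squared norm >= 2 (b + 1 - a).

  By a dimension count there are 2 (b + 1 - a) orthonormal vectors x vanishing in the first
  2a coordinates with S^T x vanishing from coordinate 2(b+1) on.  For each of them,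
  1 = <x, x> = <Omega x, Omega x> = <S^T Omega x, Omega S^T x>, and Omega S^T x is again
  supported on the first 2(b+1) coordinates, so 2 is at most the squared norm of the first
  2(b+1) coordinates of S^T Omega x plus that of S^T x.  Summing over the family and
  applying Bessel's inequality to the orthonormal families x and Omega x, which both
  vanish in the first 2a coordinates, bounds the total by twice the corner's norm.
  The minimum is attained at S = 1.
*)
theory Submission
  imports Defs "Jordan_Normal_Form.Determinant"
begin

section \<open>Orthonormal families and Bessel's inequality\<close>

lemma exists_nonzero_orthogonal_vec:
  fixes G :: "real vec set"
  assumes "finite G" "G \<subseteq> carrier_vec N" "card G < N"
  shows "\<exists>v \<in> carrier_vec N. v \<noteq> 0\<^sub>v N \<and> (\<forall>g\<in>G. g \<bullet> v = 0)"
proof -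
  obtain r where r: "bij_betw r {..<card G} G"
    using ex_bij_betw_nat_finite[OF assms(1)] lessThan_atLeast0 by metis
  have rG: "r i \<in> carrier_vec N" if "i < card G" for i
    using r that assms(2) by (auto dest: bij_betwE)
  define c where "c i = (if i < card G then r i else 0\<^sub>v N)" for i
  define M where "M = mat\<^sub>r N N (\<lambda>i. if i = card G then 0\<^sub>v N else c i)"
  have M: "M \<in> carrier_mat N N" unfolding M_def by auto
  have "det M = 0" unfolding M_def
    by (rule det_row_0) (use assms rG in \<open>auto simp: c_def\<close>)
  then obtain v where v: "v \<in> carrier_vec N" "v \<noteq> 0\<^sub>v N" "M *\<^sub>v v = 0\<^sub>v N"
    using det_0_iff_vec_prod_zero_field[OF M] by auto
  have "r i \<bullet> v = 0" if "i < card G" for i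
  proof -
    have "row M i = r i" using that assms rG unfolding M_def c_def by auto
    then show ?thesis using arg_cong[OF v(3), of "\<lambda>w. w $ i"] that assms(3) M by simp
  qed
  then have "\<forall>g\<in>G. g \<bullet> v = 0" using r by (metis bij_betw_iff_bijections lessThan_iff)
  with v show ?thesis by blast
qed

lemma exists_orthonormal_family_orthogonal:
  fixes G :: "real vec set"
  assumes G: "finite G" "G \<subseteq> carrier_vec N" and K: "card G + K \<le> N"
  shows "\<exists>xs. (\<forall>t<K. xs t \<in> carrier_vec N \<and> (\<forall>g\<in>G. g \<bullet> xs t = 0))
            \<and> (\<forall>t<K. \<forall>s<K. xs t \<bullet> xs s = (if t = s then 1 else 0))"
  using K
proof (induction K)
  case 0
  then show ?case by simp
next
  case (Suc K)
  then obtain xs where xs: "\<forall>t<K. xs t \<in> carrier_vec N \<and> (\<forall>g\<in>G. g \<bullet> xs t = 0)"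
    and orth: "\<forall>t<K. \<forall>s<K. xs t \<bullet> xs s = (if t = s then 1 else 0)" by auto
  have "card (G \<union> xs ` {..<K}) < N"
    using card_Un_le[of G "xs ` {..<K}"] card_image_le[of "{..<K}" xs] Suc.prems by simp
  then obtain v where v: "v \<in> carrier_vec N" "v \<noteq> 0\<^sub>v N"
    and v_orth: "\<forall>g \<in> G \<union> xs ` {..<K}. g \<bullet> v = 0"
    using exists_nonzero_orthogonal_vec[of "G \<union> xs ` {..<K}" N] G xs by auto
  have "v \<bullet> v > 0" using conjugate_square_greater_0_vec[OF v(1)] v(2) by simp
  define w where "w = (1 / sqrt (v \<bullet> v)) \<cdot>\<^sub>v v"
  have w: "w \<in> carrier_vec N" using v unfolding w_def by simp
  have "w \<bullet> w = 1"
    using v(1) \<open>v \<bullet> v > 0\<close> unfolding w_def by (simp add: real_sqrt_mult[symmetric])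
  moreover have "g \<bullet> w = 0" if "g \<in> G \<union> xs ` {..<K}" for g
    using that v_orth v(1) G xs unfolding w_def by auto
  moreover have "w \<bullet> xs t = 0" if "t < K" for t
    using calculation(2)[of "xs t"] comm_scalar_prod[OF w, of "xs t"] xs that by auto
  ultimately show ?case
    by (intro exI[of _ "xs(K := w)"]) (use xs orth w in auto)
qed

lemma bessel_inequality:
  fixes xs :: "nat \<Rightarrow> real vec"
  assumes xs: "\<forall>t<K. xs t \<in> carrier_vec N"
    and orth: "\<forall>t<K. \<forall>s<K. xs t \<bullet> xs s = (if t = s then 1 else 0)"
    and w: "w \<in> carrier_vec N"
  shows "(\<Sum>t<K. (w \<bullet> xs t)^2) \<le> w \<bullet> w"
proof -
  define c where "c t = w \<bullet> xs t" for t
  \<comment> \<open>coordinates of the orthogonal projection of w onto the span of the family\<close>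
  define p where "p i = (\<Sum>t<K. c t * xs t $ i)" for i
  have dot: "u \<bullet> v = (\<Sum>i<N. u $ i * v $ i)" if "v \<in> carrier_vec N" for u v :: "real vec"
    using that by (simp add: scalar_prod_def atLeast0LessThan)
  have wp: "(\<Sum>i<N. w $ i * p i) = (\<Sum>t<K. c t * c t)"
    unfolding p_def sum_distrib_left
    by (subst sum.swap) (use xs in \<open>simp add: c_def dot sum_distrib_left ac_simps\<close>)
  have px: "(\<Sum>i<N. p i * xs s $ i) = c s" if "s < K" for s
  proof -
    have "(\<Sum>i<N. p i * xs s $ i) = (\<Sum>t<K. c t * (xs t \<bullet> xs s))"
      unfolding p_def sum_distrib_right
      by (subst sum.swap) (use xs that in \<open>simp add: dot sum_distrib_left ac_simps\<close>)
    also have "\<dots> = (\<Sum>t<K. if t = s then c t else 0)"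
      using orth that by (intro sum.cong) auto
    also have "\<dots> = c s" using that by simp
    finally show ?thesis .
  qed
  have pp: "(\<Sum>i<N. p i * p i) = (\<Sum>t<K. c t * c t)"
    unfolding p_def[of i for i] sum_distrib_left
    by (subst sum.swap) (simp add: px sum_distrib_left[symmetric] ac_simps p_def[symmetric])
  have "0 \<le> (\<Sum>i<N. (w $ i - p i)^2)" by (simp add: sum_nonneg)
  also have "\<dots> = (\<Sum>i<N. w $ i * w $ i) - 2 * (\<Sum>i<N. w $ i * p i) + (\<Sum>i<N. p i * p i)"
    by (simp add: power2_eq_square algebra_simps sum.distrib sum_subtractf sum_distrib_left)
  finally show ?thesis using wp pp dot[OF w] unfolding c_def by (simp add: power2_eq_square)
qed

lemma exists_orthonormal_family_vanishing:
  fixes S :: "real mat"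
  assumes S: "S \<in> carrier_mat N N" and "m \<le> m'" "m' \<le> N"
  shows "\<exists>xs. (\<forall>t < m' - m. xs t \<in> carrier_vec N \<and> (\<forall>i<m. xs t $ i = 0)
                  \<and> (\<forall>k. m' \<le> k \<longrightarrow> k < N \<longrightarrow> (transpose_mat S *\<^sub>v xs t) $ k = 0))
            \<and> (\<forall>t < m' - m. \<forall>s < m' - m. xs t \<bullet> xs s = (if t = s then 1 else 0))"
proof -
  define G where "G = unit_vec N ` {..<m} \<union> col S ` {m'..<N}"
  have "card G \<le> card (unit_vec N ` {..<m} :: real vec set) + card (col S ` {m'..<N})"
    unfolding G_def by (rule card_Un_le)
  also have "\<dots> \<le> m + (N - m')"
    by (intro add_mono order_trans[OF card_image_le]) simp_all
  finally have "card G \<le> m + (N - m')" .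
  then have card: "card G + (m' - m) \<le> N" using assms by linarith
  have G: "finite G" "G \<subseteq> carrier_vec N" using S assms unfolding G_def by auto
  obtain xs where xs: "\<forall>t < m' - m. xs t \<in> carrier_vec N \<and> (\<forall>g\<in>G. g \<bullet> xs t = 0)"
    and orth: "\<forall>t < m' - m. \<forall>s < m' - m. xs t \<bullet> xs s = (if t = s then 1 else 0)"
    using exists_orthonormal_family_orthogonal[OF G card] by blast
  have "xs t $ i = 0" if "t < m' - m" "i < m" for t i
  proof -
    have "unit_vec N i \<in> G" using that unfolding G_def by simp
    then have "unit_vec N i \<bullet> xs t = 0" using xs that by blast
    moreover have "xs t \<in> carrier_vec N" "i < N" using xs that assms by auto
    ultimately show ?thesis by simp
  qed
  moreover have "(transpose_mat S *\<^sub>v xs t) $ k = 0" if "t < m' - m" "m' \<le> k" "k < N" for t k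
  proof -
    have "col S k \<in> G" using that unfolding G_def by simp
    then have "col S k \<bullet> xs t = 0" using xs that by blast
    then show ?thesis using xs that S by simp
  qed
  ultimately show ?thesis using xs orth by blast
qed

lemma sum_sq_transpose_mult_orthonormal_le:
  fixes S :: "real mat" and xs :: "nat \<Rightarrow> real vec" and K :: nat
  assumes S: "S \<in> carrier_mat N N'" and k: "k < N'"
    and xs: "\<forall>t<K. xs t \<in> carrier_vec N \<and> (\<forall>i<m. xs t $ i = 0)"
    and orth: "\<forall>t<K. \<forall>s<K. xs t \<bullet> xs s = (if t = s then 1 else 0)"
  shows "(\<Sum>t<K. ((transpose_mat S *\<^sub>v xs t) $ k)^2) \<le> (\<Sum>l<N. if m \<le> l then (S $$ (l, k))^2 else 0)"
proof -
  define w where "w = vec N (\<lambda>l. if m \<le> l then S $$ (l, k) else 0)"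
  have "(transpose_mat S *\<^sub>v xs t) $ k = w \<bullet> xs t" if "t < K" for t
    using S k xs that unfolding w_def by (auto simp: scalar_prod_def intro!: sum.cong)
  then have "(\<Sum>t<K. ((transpose_mat S *\<^sub>v xs t) $ k)^2) = (\<Sum>t<K. (w \<bullet> xs t)^2)" by simp
  also have "\<dots> \<le> w \<bullet> w"
    using bessel_inequality[of K xs N w] xs orth by (simp add: w_def)
  also have "w \<bullet> w = (\<Sum>l<N. if m \<le> l then (S $$ (l, k))^2 else 0)"
    unfolding w_def by (auto simp: scalar_prod_def atLeast0LessThan power2_eq_square intro!: sum.cong)
  finally show ?thesis .
qed

section \<open>Abel summation\<close>

definition backward_diff :: "(nat \<Rightarrow> 'a::ab_group_add) \<Rightarrow> nat \<Rightarrow> 'a" where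
  "backward_diff f a = f a - (if a = 0 then 0 else f (a - 1))"

definition forward_diff :: "nat \<Rightarrow> (nat \<Rightarrow> 'a::ab_group_add) \<Rightarrow> nat \<Rightarrow> 'a" where
  "forward_diff n f b = f b - (if Suc b < n then f (Suc b) else 0)"

lemma eq_sum_backward_diff:
  assumes "p < n"
  shows "f p = (\<Sum>a<n. if a \<le> p then backward_diff f a else 0)"
proof -
  have "(\<Sum>a\<le>q. backward_diff f a) = f q" for q
    by (induction q) (auto simp: backward_diff_def)
  moreover have "{a \<in> {..<n}. a \<le> p} = {..p}" using assms by auto
  ultimately show ?thesis by (simp add: sum.inter_filter[symmetric])
qed

lemma eq_sum_forward_diff:
  assumes "r < n"
  shows "f r = (\<Sum>b<n. if r \<le> b then forward_diff n f b else 0)"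
proof -
  define g where "g b = (if b < n then f b else 0)" for b
  have "f r = g r - g n" using assms by (simp add: g_def)
  also have "\<dots> = (\<Sum>b\<in>{r..<n}. g b - g (Suc b))"
    using sum_Suc_diff'[of r n g] assms by (simp add: sum_subtractf) (metis minus_diff_eq)
  also have "\<dots> = (\<Sum>b\<in>{r..<n}. forward_diff n f b)"
    by (rule sum.cong) (auto simp: g_def forward_diff_def)
  also have "{r..<n} = {b \<in> {..<n}. r \<le> b}" by auto
  finally show ?thesis by (simp only: sum.inter_filter[OF finite_lessThan])
qed

lemma sum_sum_sum_swap:
  "(\<Sum>p\<in>P. \<Sum>a\<in>A. \<Sum>b\<in>B. f p a b) = (\<Sum>a\<in>A. \<Sum>b\<in>B. \<Sum>p\<in>P. f p a b)"
  by (subst sum.swap) (simp add: sum.swap[of _ P])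

lemma sum_mult_eq_sum_corner_sums:
  fixes \<alpha> \<beta> :: "nat \<Rightarrow> real" and F :: "nat \<Rightarrow> nat \<Rightarrow> real"
  shows "(\<Sum>p<n. \<Sum>r<n. \<alpha> p * \<beta> r * F p r)
    = (\<Sum>a<n. \<Sum>b<n. backward_diff \<alpha> a * forward_diff n \<beta> b *
         (\<Sum>p<n. \<Sum>r<n. if a \<le> p \<and> r \<le> b then F p r else 0))"
    (is "_ = (\<Sum>a<n. \<Sum>b<n. ?\<delta> a * ?\<epsilon> b * _)")
proof -
  have "\<alpha> p * \<beta> r * x = (\<Sum>a<n. \<Sum>b<n. ?\<delta> a * ?\<epsilon> b * (if a \<le> p \<and> r \<le> b then x else 0))"
    if "p < n" "r < n" for p r x
  proof -
    have "\<alpha> p * \<beta> r = (\<Sum>a<n. \<Sum>b<n. (if a \<le> p then ?\<delta> a else 0) * (if r \<le> b then ?\<epsilon> b else 0))"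
      by (subst eq_sum_backward_diff[OF that(1)], subst eq_sum_forward_diff[OF that(2)])
        (rule sum_product)
    then show ?thesis by (simp add: sum_distrib_right; intro sum.cong refl; simp)
  qed
  then have "(\<Sum>p<n. \<Sum>r<n. \<alpha> p * \<beta> r * F p r)
      = (\<Sum>p<n. \<Sum>r<n. \<Sum>a<n. \<Sum>b<n. ?\<delta> a * ?\<epsilon> b * (if a \<le> p \<and> r \<le> b then F p r else 0))"
    by (intro sum.cong refl) auto
  also have "\<dots> = (\<Sum>p<n. \<Sum>a<n. \<Sum>b<n. \<Sum>r<n. ?\<delta> a * ?\<epsilon> b * (if a \<le> p \<and> r \<le> b then F p r else 0))"
    by (intro sum.cong refl sum_sum_sum_swap)
  also have "\<dots> = (\<Sum>a<n. \<Sum>b<n. \<Sum>p<n. \<Sum>r<n. ?\<delta> a * ?\<epsilon> b * (if a \<le> p \<and> r \<le> b then F p r else 0))"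
    by (rule sum_sum_sum_swap)
  finally show ?thesis by (simp only: sum_distrib_left)
qed

lemma weighted_sum_mono_of_corner_sums:
  fixes \<alpha> \<beta> :: "nat \<Rightarrow> real" and F G :: "nat \<Rightarrow> nat \<Rightarrow> real"
  assumes alpha_nonneg: "\<And>j. j < n \<Longrightarrow> 0 \<le> \<alpha> j"
    and alpha_mono: "\<And>i j. i \<le> j \<Longrightarrow> j < n \<Longrightarrow> \<alpha> i \<le> \<alpha> j"
    and beta_nonneg: "\<And>j. j < n \<Longrightarrow> 0 \<le> \<beta> j"
    and beta_anti: "\<And>i j. i \<le> j \<Longrightarrow> j < n \<Longrightarrow> \<beta> j \<le> \<beta> i"
    and corner: "\<And>a b. a < n \<Longrightarrow> b < n \<Longrightarrow>
      (\<Sum>p<n. \<Sum>r<n. if a \<le> p \<and> r \<le> b then F p r else 0)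
        \<le> (\<Sum>p<n. \<Sum>r<n. if a \<le> p \<and> r \<le> b then G p r else 0)"
  shows "(\<Sum>p<n. \<Sum>r<n. \<alpha> p * \<beta> r * F p r) \<le> (\<Sum>p<n. \<Sum>r<n. \<alpha> p * \<beta> r * G p r)"
proof -
  have \<delta>_nonneg: "0 \<le> backward_diff \<alpha> a" if "a < n" for a
    using that alpha_nonneg[of 0] alpha_mono[of "a - 1" a] unfolding backward_diff_def by auto
  have \<epsilon>_nonneg: "0 \<le> forward_diff n \<beta> b" if "b < n" for b
    using that beta_nonneg[of b] beta_anti[of b "Suc b"] unfolding forward_diff_def by auto
  show ?thesis unfolding sum_mult_eq_sum_corner_sums[where F = F] sum_mult_eq_sum_corner_sums[where F = G]
    by (rule sum_mono, rule sum_mono, rule mult_left_mono[OF corner])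
      (simp_all add: \<delta>_nonneg \<epsilon>_nonneg)
qed

section \<open>The symplectic form\<close>

lemma sum_lessThan_double:
  fixes f :: "nat \<Rightarrow> 'a::comm_monoid_add"
  shows "(\<Sum>i<2*m. f i) = (\<Sum>p<m. f (2*p) + f (Suc (2*p)))"
  by (induction m) (simp_all add: add.assoc)

lemma dim_Omega [simp]: "dim_row (Omega n) = 2*n" "dim_col (Omega n) = 2*n"
  unfolding Omega_def by simp_all

lemma Omega_carrier [simp]: "Omega n \<in> carrier_mat (2*n) (2*n)"
  unfolding Omega_def by simp

lemma Omega_mult_vec_carrier [simp]: "Omega n *\<^sub>v v \<in> carrier_vec (2*n)"
  by (rule carrier_vecI) simp

lemma Omega_mult_vec_nth:
  assumes v: "v \<in> carrier_vec (2*n)" and i: "i < 2*n"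
  shows "(Omega n *\<^sub>v v) $ i = (if even i then v $ Suc i else - v $ (i - 1))"
proof -
  have entry: "Omega n $$ (i, j) =
      (if even i \<and> j = Suc i then 1 else if odd i \<and> j = i - 1 then -1 else 0)" if "j < 2*n" for j
  proof -
    have "(i div 2 = j div 2 \<and> even i \<and> odd j) \<longleftrightarrow> even i \<and> j = Suc i"
      and "(i div 2 = j div 2 \<and> odd i \<and> even j) \<longleftrightarrow> odd i \<and> j = i - 1"
      by presburger+
    then show ?thesis
      unfolding Omega_def index_mat(1)[OF i that] by (simp only: case_prod_conv)
  qed
  have "(Omega n *\<^sub>v v) $ i = (\<Sum>j<2*n. Omega n $$ (i, j) * v $ j)"
    using i v by (auto simp: scalar_prod_def atLeast0LessThan intro!: sum.cong)
  also have "\<dots> = (\<Sum>j<2*n. if even i \<and> j = Suc i then v $ j else if odd i \<and> j = i - 1 then - v $ j else 0)"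
    by (intro sum.cong refl) (simp add: entry)
  also have "\<dots> = (if even i then v $ Suc i else - v $ (i - 1))"
  proof (cases "even i")
    case True
    then have "Suc i < 2*n" using i by presburger
    moreover have "(\<Sum>j<2*n. if even i \<and> j = Suc i then v $ j else if odd i \<and> j = i - 1 then - v $ j else 0)
        = (\<Sum>j<2*n. if j = Suc i then v $ j else 0)"
      using True by (intro sum.cong) auto
    ultimately show ?thesis using True by simp
  next
    case False
    then have "(\<Sum>j<2*n. if even i \<and> j = Suc i then v $ j else if odd i \<and> j = i - 1 then - v $ j else 0)
        = (\<Sum>j<2*n. if j = i - 1 then - v $ j else 0)"
      by (intro sum.cong) auto
    then show ?thesis using False i by simp
  qed
  finally show ?thesis .
qed

lemma Omega_mult_vec_nth_pair [simp]:
  assumes "v \<in> carrier_vec (2*n)" "p < n"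
  shows "(Omega n *\<^sub>v v) $ (2*p) = v $ Suc (2*p)"
    and "(Omega n *\<^sub>v v) $ Suc (2*p) = - v $ (2*p)"
  using assms by (simp_all add: Omega_mult_vec_nth del: index_mult_mat_vec)

lemma scalar_prod_Omega_Omega:
  assumes "x \<in> carrier_vec (2*n)" "y \<in> carrier_vec (2*n)"
  shows "(Omega n *\<^sub>v x) \<bullet> (Omega n *\<^sub>v y) = x \<bullet> y"
proof -
  have "(Omega n *\<^sub>v x) \<bullet> (Omega n *\<^sub>v y) = (\<Sum>i<2*n. (Omega n *\<^sub>v x) $ i * (Omega n *\<^sub>v y) $ i)"
    unfolding scalar_prod_def[of "Omega n *\<^sub>v x"] by (simp only: dim_mult_mat_vec dim_Omega atLeast0LessThan)
  also have "\<dots> = (\<Sum>i<2*n. x $ i * y $ i)"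
    unfolding sum_lessThan_double using assms by (simp add: add.commute del: index_mult_mat_vec)
  also have "\<dots> = x \<bullet> y"
    using assms by (simp add: scalar_prod_def atLeast0LessThan)
  finally show ?thesis .
qed

lemma scalar_prod_Omega_le_half_sum_sq:
  assumes u: "u \<in> carrier_vec (2*n)" and v: "v \<in> carrier_vec (2*n)" and "c \<le> n"
    and v_zero: "\<And>i. 2*c \<le> i \<Longrightarrow> i < 2*n \<Longrightarrow> v $ i = 0"
  shows "u \<bullet> (Omega n *\<^sub>v v) \<le> (\<Sum>i<2*c. (u $ i)^2 + (v $ i)^2) / 2"
proof -
  define f where "f p = u $ (2*p) * v $ Suc (2*p) - u $ Suc (2*p) * v $ (2*p)" for p
  have "u \<bullet> (Omega n *\<^sub>v v) = (\<Sum>p<n. f p)"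
    unfolding scalar_prod_def[of u] using v
    by (simp add: atLeast0LessThan sum_lessThan_double f_def del: index_mult_mat_vec)
  also have "\<dots> = (\<Sum>p<c. f p)"
    by (rule sum.mono_neutral_right) (use \<open>c \<le> n\<close> v_zero in \<open>auto simp: f_def\<close>)
  also have "\<dots> \<le> (\<Sum>p<c. ((u $ (2*p))^2 + (u $ Suc (2*p))^2 + (v $ (2*p))^2 + (v $ Suc (2*p))^2) / 2)"
  proof (rule sum_mono)
    fix p
    have "0 \<le> (u $ (2*p) - v $ Suc (2*p))^2 + (u $ Suc (2*p) + v $ (2*p))^2" by simp
    then show "f p \<le> ((u $ (2*p))^2 + (u $ Suc (2*p))^2 + (v $ (2*p))^2 + (v $ Suc (2*p))^2) / 2"
      unfolding f_def power2_diff power2_sum by simp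
  qed
  also have "\<dots> = (\<Sum>i<2*c. (u $ i)^2 + (v $ i)^2) / 2"
    by (simp add: sum_lessThan_double sum_divide_distrib add_ac)
  finally show ?thesis .
qed

lemma symplectic_scalar_prod_Omega:
  assumes "symplectic n S" and x: "x \<in> carrier_vec (2*n)" and y: "y \<in> carrier_vec (2*n)"
  shows "(transpose_mat S *\<^sub>v x) \<bullet> (Omega n *\<^sub>v (transpose_mat S *\<^sub>v y)) = x \<bullet> (Omega n *\<^sub>v y)"
proof -
  have S: "S \<in> carrier_mat (2*n) (2*n)" and S_Omega: "S * Omega n * transpose_mat S = Omega n"
    using assms(1) unfolding symplectic_def by auto
  have ST: "transpose_mat S \<in> carrier_mat (2*n) (2*n)" using S by simp
  have "Omega n *\<^sub>v y = (S * Omega n * transpose_mat S) *\<^sub>v y" by (simp only: S_Omega)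
  also have "\<dots> = (S * Omega n) *\<^sub>v (transpose_mat S *\<^sub>v y)"
    by (rule assoc_mult_mat_vec) (use S ST y in auto)
  also have "\<dots> = S *\<^sub>v (Omega n *\<^sub>v (transpose_mat S *\<^sub>v y))"
    by (rule assoc_mult_mat_vec) (use S ST y in auto)
  finally have "x \<bullet> (Omega n *\<^sub>v y) = x \<bullet> (S *\<^sub>v (Omega n *\<^sub>v (transpose_mat S *\<^sub>v y)))"
    by simp
  also have "\<dots> = (transpose_mat S *\<^sub>v x) \<bullet> (Omega n *\<^sub>v (transpose_mat S *\<^sub>v y))"
    using S x y by (intro transpose_vec_mult_scalar[symmetric]) auto
  finally show ?thesis by simp
qed

lemma symplectic_Omega_unit_vector_bound:
  assumes S: "symplectic n S" and x: "x \<in> carrier_vec (2*n)" "x \<bullet> x = 1" and "c \<le> n"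
    and Sx_zero: "\<And>k. 2*c \<le> k \<Longrightarrow> k < 2*n \<Longrightarrow> (transpose_mat S *\<^sub>v x) $ k = 0"
  shows "2 \<le> (\<Sum>k<2*c. ((transpose_mat S *\<^sub>v (Omega n *\<^sub>v x)) $ k)^2 + ((transpose_mat S *\<^sub>v x) $ k)^2)"
proof -
  have ST: "transpose_mat S \<in> carrier_mat (2*n) (2*n)" using S unfolding symplectic_def by simp
  have "1 = (Omega n *\<^sub>v x) \<bullet> (Omega n *\<^sub>v x)" using x by (simp add: scalar_prod_Omega_Omega)
  also have "\<dots> = (transpose_mat S *\<^sub>v (Omega n *\<^sub>v x)) \<bullet> (Omega n *\<^sub>v (transpose_mat S *\<^sub>v x))"
    using symplectic_scalar_prod_Omega[OF S _ x(1)] by simp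
  also have "\<dots> \<le> (\<Sum>k<2*c. ((transpose_mat S *\<^sub>v (Omega n *\<^sub>v x)) $ k)^2 + ((transpose_mat S *\<^sub>v x) $ k)^2) / 2"
    by (rule scalar_prod_Omega_le_half_sum_sq) (use ST x \<open>c \<le> n\<close> Sx_zero in auto)
  finally show ?thesis by simp
qed

lemma symplectic_corner_sum_sq_ge:
  assumes S: "symplectic n S" and "a \<le> c" "c \<le> n"
  shows "2 * real (c - a) \<le> (\<Sum>k<2*c. \<Sum>l<2*n. if 2*a \<le> l then (S $$ (l, k))^2 else 0)"
proof -
  define K where "K = 2*c - 2*a"
  define C where "C k = (\<Sum>l<2*n. if 2*a \<le> l then (S $$ (l, k))^2 else 0)" for k
  have S_carrier: "S \<in> carrier_mat (2*n) (2*n)" using S unfolding symplectic_def by simp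
  have "2*a \<le> 2*c" "2*c \<le> 2*n" using assms by simp_all
  then obtain xs where xs: "\<forall>t<K. xs t \<in> carrier_vec (2*n) \<and> (\<forall>i<2*a. xs t $ i = 0)
      \<and> (\<forall>k. 2*c \<le> k \<longrightarrow> k < 2*n \<longrightarrow> (transpose_mat S *\<^sub>v xs t) $ k = 0)"
    and orth: "\<forall>t<K. \<forall>s<K. xs t \<bullet> xs s = (if t = s then 1 else 0)"
    using exists_orthonormal_family_vanishing[OF S_carrier] unfolding K_def by blast
  define z where "z t = Omega n *\<^sub>v xs t" for t
  have z_zero: "z t $ i = 0" if "t < K" "i < 2*a" for t i
  proof -
    have i: "i < 2*n" "even i \<Longrightarrow> Suc i < 2*a" "i - 1 < 2*a" using that assms by presburger+
    have "xs t \<in> carrier_vec (2*n)" using xs that by blast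
    with i show ?thesis using xs that unfolding z_def Omega_mult_vec_nth[OF \<open>xs t \<in> _\<close> i(1)] by auto
  qed
  have z_orth: "\<forall>t<K. \<forall>s<K. z t \<bullet> z s = (if t = s then 1 else 0)"
    using xs orth unfolding z_def by (simp add: scalar_prod_Omega_Omega)
  have "2 * real K = (\<Sum>t<K. 2)" by simp
  also have "\<dots> \<le> (\<Sum>t<K. \<Sum>k<2*c. ((transpose_mat S *\<^sub>v z t) $ k)^2 + ((transpose_mat S *\<^sub>v xs t) $ k)^2)"
    unfolding z_def using xs orth assms
    by (intro sum_mono symplectic_Omega_unit_vector_bound[OF S]) auto
  also have "\<dots> = (\<Sum>k<2*c. (\<Sum>t<K. ((transpose_mat S *\<^sub>v z t) $ k)^2) + (\<Sum>t<K. ((transpose_mat S *\<^sub>v xs t) $ k)^2))"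
    by (simp add: sum.distrib sum.swap[of _ "{..<K}"])
  also have "\<dots> \<le> (\<Sum>k<2*c. C k + C k)"
    unfolding C_def using S_carrier xs z_zero z_orth orth assms
    by (intro sum_mono add_mono sum_sq_transpose_mult_orthonormal_le[of S "2*n" "2*n"]) (auto simp: z_def)
  also have "\<dots> = 2 * (\<Sum>k<2*c. C k)" by (simp add: sum_distrib_left)
  finally have "real K \<le> (\<Sum>k<2*c. C k)" by simp
  moreover have "real K = 2 * real (c - a)" unfolding K_def by simp
  ultimately show ?thesis unfolding C_def by simp
qed

lemma symplectic_one: "symplectic n (1\<^sub>m (2*n))"
  unfolding symplectic_def
  using left_mult_one_mat[OF Omega_carrier] right_mult_one_mat[OF Omega_carrier] by simp

section \<open>Traces against pair-diagonal matrices\<close>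

lemma pair_diag_carrier [simp]: "pair_diag n a \<in> carrier_mat (2*n) (2*n)"
  unfolding pair_diag_def by simp

lemma pair_diag_mult:
  assumes A: "A \<in> carrier_mat (2*n) m"
  shows "pair_diag n a * A = mat (2*n) m (\<lambda>(i, k). a (i div 2) * A $$ (i, k))"
proof (rule eq_matI)
  fix i k assume "i < dim_row (mat (2*n) m (\<lambda>(i, k). a (i div 2) * A $$ (i, k)))"
    and "k < dim_col (mat (2*n) m (\<lambda>(i, k). a (i div 2) * A $$ (i, k)))"
  then have ik: "i < 2*n" "k < m" by simp_all
  have "(pair_diag n a * A) $$ (i, k) = (\<Sum>j<2*n. (if i = j then a (i div 2) else 0) * A $$ (j, k))"
    using ik A by (simp add: pair_diag_def scalar_prod_def atLeast0LessThan)
  also have "\<dots> = a (i div 2) * A $$ (i, k)"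
    using ik by (simp add: if_distrib[of "\<lambda>x. x * _"] cong: if_cong)
  finally show "(pair_diag n a * A) $$ (i, k) = mat (2*n) m (\<lambda>(i, k). a (i div 2) * A $$ (i, k)) $$ (i, k)"
    using ik by simp
qed (use A in \<open>simp_all add: pair_diag_def\<close>)

lemma mult_pair_diag:
  assumes A: "A \<in> carrier_mat m (2*n)"
  shows "A * pair_diag n a = mat m (2*n) (\<lambda>(i, k). A $$ (i, k) * a (k div 2))"
proof (rule eq_matI)
  fix i k assume "i < dim_row (mat m (2*n) (\<lambda>(i, k). A $$ (i, k) * a (k div 2)))"
    and "k < dim_col (mat m (2*n) (\<lambda>(i, k). A $$ (i, k) * a (k div 2)))"
  then have ik: "i < m" "k < 2*n" by simp_all
  have "(A * pair_diag n a) $$ (i, k) = (\<Sum>j<2*n. A $$ (i, j) * (if j = k then a (j div 2) else 0))"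
    using ik A by (simp add: pair_diag_def scalar_prod_def atLeast0LessThan)
  also have "\<dots> = A $$ (i, k) * a (k div 2)"
    using ik by (simp add: if_distrib[of "\<lambda>x. _ * x"] cong: if_cong)
  finally show "(A * pair_diag n a) $$ (i, k) = mat m (2*n) (\<lambda>(i, k). A $$ (i, k) * a (k div 2)) $$ (i, k)"
    using ik by simp
qed (use A in \<open>simp_all add: pair_diag_def\<close>)

lemma mtrace_pair_diag_mult_pair_diag:
  "mtrace (pair_diag n \<alpha> * pair_diag n \<beta>) = (\<Sum>p<n. \<alpha> p * \<beta> p * 2)"
proof -
  have "mtrace (pair_diag n \<alpha> * pair_diag n \<beta>) = (\<Sum>i<2*n. \<alpha> (i div 2) * \<beta> (i div 2))"
    unfolding mtrace_def pair_diag_mult[OF pair_diag_carrier] by (simp add: pair_diag_def)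
  then show ?thesis by (simp add: sum_lessThan_double) (simp add: mult.commute)
qed

lemma mtrace_pair_diag_congruence:
  assumes S: "S \<in> carrier_mat (2*n) (2*n)"
  shows "mtrace (pair_diag n \<alpha> * S * pair_diag n \<beta> * transpose_mat S)
       = (\<Sum>i<2*n. \<Sum>k<2*n. \<alpha> (i div 2) * \<beta> (k div 2) * (S $$ (i, k))^2)"
proof -
  have "pair_diag n \<alpha> * S * pair_diag n \<beta>
      = mat (2*n) (2*n) (\<lambda>(i, k). \<alpha> (i div 2) * S $$ (i, k) * \<beta> (k div 2))"
    unfolding pair_diag_mult[OF S] by (subst mult_pair_diag) auto
  then show ?thesis
    unfolding mtrace_def using S
    by (auto simp: scalar_prod_def atLeast0LessThan power2_eq_square ac_simps intro!: sum.cong)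
qed

definition block_sq :: "real mat \<Rightarrow> nat \<Rightarrow> nat \<Rightarrow> real" where
  "block_sq S p r = (\<Sum>i\<in>{2*p, Suc (2*p)}. \<Sum>k\<in>{2*r, Suc (2*r)}. (S $$ (i, k))^2)"

lemma sum_sq_eq_sum_block_sq:
  "(\<Sum>i<2*n. \<Sum>k<2*n. G (i div 2) (k div 2) * (S $$ (i, k))^2)
     = (\<Sum>p<n. \<Sum>r<n. G p r * block_sq S p r)"
  by (simp add: sum_lessThan_double block_sq_def sum.distrib distrib_left)

lemma block_sq_nonneg: "0 \<le> block_sq S p r"
  unfolding block_sq_def by (intro sum_nonneg) simp

lemma sum_corner_diagonal:
  assumes "b < n"
  shows "(\<Sum>p<n. \<Sum>r<n. if a \<le> p \<and> r \<le> b then (if p = r then 2 else 0) else 0) = 2 * real (Suc b - a)"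
proof -
  have "(\<Sum>p<n. \<Sum>r<n. if a \<le> p \<and> r \<le> b then (if p = r then 2 else 0) else 0)
      = (\<Sum>p<n. if a \<le> p \<and> p \<le> b then 2 else (0::real))"
  proof (intro sum.cong refl)
    fix p assume "p \<in> {..<n}"
    have "(\<Sum>r<n. if a \<le> p \<and> r \<le> b then (if p = r then 2 else 0) else 0)
        = (\<Sum>r<n. if p = r then (if a \<le> p \<and> p \<le> b then 2 else 0) else (0::real))"
      by (intro sum.cong) auto
    then show "(\<Sum>r<n. if a \<le> p \<and> r \<le> b then (if p = r then 2 else 0) else 0)
        = (if a \<le> p \<and> p \<le> b then 2 else (0::real))"
      using \<open>p \<in> {..<n}\<close> by simp
  qed
  also have "\<dots> = 2 * real (card {p \<in> {..<n}. a \<le> p \<and> p \<le> b})"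
    by (simp add: sum.inter_filter[OF finite_lessThan, symmetric])
  also have "{p \<in> {..<n}. a \<le> p \<and> p \<le> b} = {a..b}" using assms by auto
  finally show ?thesis by simp
qed

lemma symplectic_block_corner_ge:
  assumes S: "symplectic n S" and "b < n"
  shows "2 * real (Suc b - a) \<le> (\<Sum>p<n. \<Sum>r<n. if a \<le> p \<and> r \<le> b then block_sq S p r else 0)"
proof (cases "a \<le> b")
  case False
  then show ?thesis by (simp add: sum_nonneg block_sq_nonneg)
next
  case True
  have "2 * real (Suc b - a) \<le> (\<Sum>k<2 * Suc b. \<Sum>l<2*n. if 2*a \<le> l then (S $$ (l, k))^2 else 0)"
    using symplectic_corner_sum_sq_ge[OF S, of a "Suc b"] True assms by simp
  also have "\<dots> = (\<Sum>l<2*n. \<Sum>k<2 * Suc b. if 2*a \<le> l then (S $$ (l, k))^2 else 0)"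
    by (rule sum.swap)
  also have "\<dots> = (\<Sum>l<2*n. \<Sum>k<2*n. if 2*a \<le> l \<and> k < 2 * Suc b then (S $$ (l, k))^2 else 0)"
    using assms by (intro sum.cong refl sum.mono_neutral_cong_left) auto
  also have "\<dots> = (\<Sum>l<2*n. \<Sum>k<2*n. (if a \<le> l div 2 \<and> k div 2 \<le> b then 1 else 0) * (S $$ (l, k))^2)"
  proof -
    have "a \<le> l div 2 \<longleftrightarrow> 2*a \<le> l" "k div 2 \<le> b \<longleftrightarrow> k < 2 * Suc b" for l k :: nat
      by presburger+
    then show ?thesis by (simp add: if_distrib[of "\<lambda>x. x * _"] cong: if_cong)
  qed
  also have "\<dots> = (\<Sum>p<n. \<Sum>r<n. (if a \<le> p \<and> r \<le> b then 1 else 0) * block_sq S p r)"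
    by (rule sum_sq_eq_sum_block_sq)
  also have "\<dots> = (\<Sum>p<n. \<Sum>r<n. if a \<le> p \<and> r \<le> b then block_sq S p r else 0)"
    by (simp add: if_distrib[of "\<lambda>x. x * _"] cong: if_cong)
  finally show ?thesis .
qed

lemma symplectic_corner_sums_ge_diagonal:
  assumes S: "symplectic n S" and "b < n"
  shows "(\<Sum>p<n. \<Sum>r<n. if a \<le> p \<and> r \<le> b then (if p = r then 2 else 0) else 0)
      \<le> (\<Sum>p<n. \<Sum>r<n. if a \<le> p \<and> r \<le> b then block_sq S p r else 0)"
  unfolding sum_corner_diagonal[OF \<open>b < n\<close>] by (rule symplectic_block_corner_ge[OF assms])

lemma pair_diag_congruence_one:
  "pair_diag n \<alpha> * 1\<^sub>m (2*n) * pair_diag n \<beta> * transpose_mat (1\<^sub>m (2*n)) = pair_diag n \<alpha> * pair_diag n \<beta>"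
  using right_mult_one_mat[OF pair_diag_carrier[of n \<alpha>]]
    right_mult_one_mat[OF mult_carrier_mat[OF pair_diag_carrier[of n \<alpha>] pair_diag_carrier[of n \<beta>]]]
  by simp

theorem mainTheorem2:
  fixes n :: nat and \<alpha> \<beta> :: "nat \<Rightarrow> real"
  assumes alpha_nonneg: "\<And>j. j < n \<Longrightarrow> 0 \<le> \<alpha> j"
    and alpha_mono: "\<And>i j. i \<le> j \<Longrightarrow> j < n \<Longrightarrow> \<alpha> i \<le> \<alpha> j"
    and beta_nonneg: "\<And>j. j < n \<Longrightarrow> 0 \<le> \<beta> j"
    and beta_anti: "\<And>i j. i \<le> j \<Longrightarrow> j < n \<Longrightarrow> \<beta> j \<le> \<beta> i"
  shows "(\<forall>S. symplectic n S \<longrightarrow>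
            mtrace (pair_diag n \<alpha> * pair_diag n \<beta>)
              \<le> mtrace (pair_diag n \<alpha> * S * pair_diag n \<beta> * transpose_mat S))
       \<and> (\<exists>S. symplectic n S \<and>
            mtrace (pair_diag n \<alpha> * S * pair_diag n \<beta> * transpose_mat S)
              = mtrace (pair_diag n \<alpha> * pair_diag n \<beta>))"
proof (intro conjI allI impI)
  fix S assume S: "symplectic n S"
  then have S_carrier: "S \<in> carrier_mat (2*n) (2*n)" unfolding symplectic_def by simp
  have "mtrace (pair_diag n \<alpha> * pair_diag n \<beta>) = (\<Sum>p<n. \<Sum>r<n. \<alpha> p * \<beta> r * (if p = r then 2 else 0))"
    by (simp add: mtrace_pair_diag_mult_pair_diag if_distrib[of "\<lambda>x. _ * x"] cong: if_cong)
  also have "\<dots> \<le> (\<Sum>p<n. \<Sum>r<n. \<alpha> p * \<beta> r * block_sq S p r)"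
    by (intro weighted_sum_mono_of_corner_sums symplectic_corner_sums_ge_diagonal[OF S])
      (simp_all add: alpha_nonneg alpha_mono beta_nonneg beta_anti)
  also have "\<dots> = mtrace (pair_diag n \<alpha> * S * pair_diag n \<beta> * transpose_mat S)"
    unfolding mtrace_pair_diag_congruence[OF S_carrier]
    by (rule sum_sq_eq_sum_block_sq[where G = "\<lambda>p r. \<alpha> p * \<beta> r", symmetric])
  finally show "mtrace (pair_diag n \<alpha> * pair_diag n \<beta>)
      \<le> mtrace (pair_diag n \<alpha> * S * pair_diag n \<beta> * transpose_mat S)" .
next
  show "\<exists>S. symplectic n S \<and>
      mtrace (pair_diag n \<alpha> * S * pair_diag n \<beta> * transpose_mat S) = mtrace (pair_diag n \<alpha> * pair_diag n \<beta>)"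
    using symplectic_one pair_diag_congruence_one by metis
qed

end
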